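(* For any nonzero positively oriented m-triangle $\delta$, the polar distance $r$ of its shape from the north pole (the spherical distance in the shape sphere $M^\ast\simeq S^2(1/2)$) satisfies $$\cos(2r)=4\sqrt{m_1m_2m_3}\,\frac{\Delta}{I},$$ where $\Delta$ and $I$ are the area and moment of inertia of $\delta$.
   Context: Masses $m_1,m_2,m_3>0$, $m_1+m_2+m_3=1$; m-triangle $(\mathbf a_1,\mathbf a_2,\mathbf a_3)$, $\sum m_i\mathbf a_i=0$, $I=\sum m_i|\mathbf a_i|^2$. The shape sphere $M^\ast$ is the space of oriented m-triangles with $I=1$ modulo rotation, with the kinematic metric (induced by $\sum m_i|d\mathbf a_i|^2$ through zero angular momentum lifts), isometric to a round sphere of radius $1/2$; its north pole is the shape of the positively oriented m-triangle with $m_j|\mathbf a_j|^2=(1-m_j)/2$, and the equator (at distance $\pi/4$ from it) consists of collinear shapes. *)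

theory Defs
  imports "HOL-Analysis.Analysis"
begin

text \<open>Planar triangles are triples of points in the plane, identified with complex numbers,
  indexed by 1, 2, 3 (a :: nat => complex, only a 1, a 2, a 3 matter). Masses m 1, m 2, m 3.\<close>

definition is_mtriangle :: "(nat \<Rightarrow> real) \<Rightarrow> (nat \<Rightarrow> complex) \<Rightarrow> bool" where
  "is_mtriangle m a \<longleftrightarrow> (\<Sum>i\<in>{1..3}. complex_of_real (m i) * a i) = 0"

definition inertia :: "(nat \<Rightarrow> real) \<Rightarrow> (nat \<Rightarrow> complex) \<Rightarrow> real" where
  "inertia m a = (\<Sum>i\<in>{1..3}. m i * (cmod (a i))^2)"

text \<open>Signed area (positive iff the triangle a1 a2 a3 is positively, i.e. counterclockwise, oriented).\<close>
definition signed_area :: "(nat \<Rightarrow> complex) \<Rightarrow> real" where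
  "signed_area a = Im (cnj (a 2 - a 1) * (a 3 - a 1)) / 2"

definition kin_inner :: "(nat \<Rightarrow> real) \<Rightarrow> (nat \<Rightarrow> complex) \<Rightarrow> (nat \<Rightarrow> complex) \<Rightarrow> real" where
  "kin_inner m a b = (\<Sum>i\<in>{1..3}. m i * Re (cnj (a i) * b i))"

text \<open>Great-circle distance between the normalisations (I = 1) of two nonzero configurations
  on the unit sphere of the kinematic metric.\<close>
definition config_sphere_dist :: "(nat \<Rightarrow> real) \<Rightarrow> (nat \<Rightarrow> complex) \<Rightarrow> (nat \<Rightarrow> complex) \<Rightarrow> real" where
  "config_sphere_dist m a b = arccos (kin_inner m a b / sqrt (inertia m a * inertia m b))"

text \<open>Distance in the shape sphere M* (quotient of the I = 1 sphere by rotations, with the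
  quotient of the kinematic metric): infimum over rotations of the sphere distance.\<close>
definition shape_dist :: "(nat \<Rightarrow> real) \<Rightarrow> (nat \<Rightarrow> complex) \<Rightarrow> (nat \<Rightarrow> complex) \<Rightarrow> real" where
  "shape_dist m a b = Inf ((\<lambda>u. config_sphere_dist m a (\<lambda>i. u * b i)) ` {u. cmod u = 1})"

definition is_north_pole :: "(nat \<Rightarrow> real) \<Rightarrow> (nat \<Rightarrow> complex) \<Rightarrow> bool" where
  "is_north_pole m a \<longleftrightarrow> is_mtriangle m a \<and> signed_area a > 0 \<and>
     (\<forall>j\<in>{1..3}. m j * (cmod (a j))^2 = (1 - m j) / 2)"

end

theory Submission
  imports Defs
begin

text \<open>Rotating the second configuration by a unit complex number u turns the kinematic inner
  product into Re (u g), where g = sum of m_i conj(a_i) b_i is the Hermitian kinematic product;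
  so the shape distance is arccos (|g| / sqrt (I_a I_b)), and cos 2r = 2 |g|^2 / I - 1 against the
  north pole, which has I = 1. Expanding |g|^2 as a Gram sum, the north pole data (pairwise inner
  products -1/2, and m_i m_j (n_i x n_j) = sqrt (m_1 m_2 m_3) / 2 for cyclic i, j) reduce it to
  I/2 + 2 sqrt (m_1 m_2 m_3) \<Delta>.\<close>

lemma sum_atLeastAtMost_1_3: "(\<Sum>i\<in>{1..3::nat}. f i) = f 1 + f 2 + f 3"
  by (simp add: eval_nat_numeral atLeastAtMostSuc_conv add_ac)

lemma cmod_add_square: "cmod (z + w)^2 = cmod z^2 + cmod w^2 + 2 * Re (cnj z * w)"
  unfolding cmod_power2 by (simp add: algebra_simps power2_eq_square)

lemma cmod_sum3_square:
  fixes p1 p2 p3 :: real and a1 a2 a3 b1 b2 b3 :: complex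
  shows "cmod (of_real p1 * (cnj a1 * b1) + of_real p2 * (cnj a2 * b2) + of_real p3 * (cnj a3 * b3))^2
    = (p1 * cmod a1^2) * (p1 * cmod b1^2) + (p2 * cmod a2^2) * (p2 * cmod b2^2)
      + (p3 * cmod a3^2) * (p3 * cmod b3^2)
      + 2 * (p1 * p2 * Re (cnj a1 * a2)) * Re (cnj b1 * b2)
      + 2 * (p2 * p3 * Re (cnj a2 * a3)) * Re (cnj b2 * b3)
      + 2 * (p3 * p1 * Re (cnj a3 * a1)) * Re (cnj b3 * b1)
      + 2 * Im (cnj a1 * a2) * (p1 * p2 * Im (cnj b1 * b2))
      + 2 * Im (cnj a2 * a3) * (p2 * p3 * Im (cnj b2 * b3))
      + 2 * Im (cnj a3 * a1) * (p3 * p1 * Im (cnj b3 * b1))"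
  unfolding cmod_power2 by (simp add: algebra_simps power2_eq_square)

lemma Inf_arccos_Re_rotations:
  fixes z :: complex and s :: real
  assumes "0 < s" "cmod z \<le> s"
  shows "Inf ((\<lambda>u. arccos (Re (u * z) / s)) ` {u. cmod u = 1}) = arccos (cmod z / s)"
proof (rule cInf_eq_minimum)
  have "cis (- Arg z) * z = of_real (cmod z)"
    by (metis rcis_cmod_Arg rcis_def cis_mult mult.left_commute add.left_inverse cis_zero
        mult.right_neutral)
  then show "arccos (cmod z / s) \<in> (\<lambda>u. arccos (Re (u * z) / s)) ` {u. cmod u = 1}"
    by (intro image_eqI[where x = "cis (- Arg z)"]) auto
next
  fix x assume "x \<in> (\<lambda>u. arccos (Re (u * z) / s)) ` {u. cmod u = 1}"
  then obtain u where u: "cmod u = 1" and x: "x = arccos (Re (u * z) / s)" by auto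
  have "\<bar>Re (u * z)\<bar> \<le> cmod z"
    using abs_Re_le_cmod[of "u * z"] u by (simp add: norm_mult)
  then have "-1 \<le> Re (u * z) / s" "Re (u * z) / s \<le> cmod z / s"
    using assms by (auto simp: le_divide_eq divide_right_mono)
  then show "arccos (cmod z / s) \<le> x"
    unfolding x using assms by (intro arccos_le_arccos) auto
qed

definition kin_herm :: "(nat \<Rightarrow> real) \<Rightarrow> (nat \<Rightarrow> complex) \<Rightarrow> (nat \<Rightarrow> complex) \<Rightarrow> complex" where
  "kin_herm m a b = (\<Sum>i\<in>{1..3}. of_real (m i) * (cnj (a i) * b i))"

lemma kin_inner_rotate: "kin_inner m a (\<lambda>i. u * b i) = Re (u * kin_herm m a b)"
  unfolding kin_inner_def kin_herm_def by (simp add: sum_distrib_left Re_sum algebra_simps)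

lemma inertia_rotate:
  assumes "cmod u = 1"
  shows "inertia m (\<lambda>i. u * b i) = inertia m b"
  using assms by (simp add: inertia_def norm_mult)

lemma cmod_kin_herm_square_le:
  assumes "\<forall>i\<in>{1..3}. m i \<ge> 0"
  shows "cmod (kin_herm m a b)^2 \<le> inertia m a * inertia m b"
proof -
  let ?x = "\<lambda>i. sqrt (m i) * cmod (a i)" and ?y = "\<lambda>i. sqrt (m i) * cmod (b i)"
  have "cmod (kin_herm m a b) \<le> (\<Sum>i\<in>{1..3}. ?x i * ?y i)"
  proof -
    have "cmod (kin_herm m a b) \<le> (\<Sum>i\<in>{1..3}. cmod (of_real (m i) * (cnj (a i) * b i)))"
      unfolding kin_herm_def by (rule norm_sum)
    also have "\<dots> = (\<Sum>i\<in>{1..3}. ?x i * ?y i)"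
      using assms by (intro sum.cong) (auto simp: norm_mult)
    finally show ?thesis .
  qed
  then have "cmod (kin_herm m a b)^2 \<le> (\<Sum>i\<in>{1..3}. ?x i * ?y i)^2"
    by (simp add: power_mono)
  also have "\<dots> \<le> (\<Sum>i\<in>{1..3}. (?x i)^2) * (\<Sum>i\<in>{1..3}. (?y i)^2)"
    by (rule Cauchy_Schwarz_ineq_sum)
  also have "\<dots> = inertia m a * inertia m b"
    using assms by (simp add: inertia_def power_mult_distrib)
  finally show ?thesis .
qed

lemma shape_dist_eq_arccos:
  assumes "\<forall>i\<in>{1..3}. m i \<ge> 0" "inertia m a > 0" "inertia m b > 0"
  shows "shape_dist m a b = arccos (cmod (kin_herm m a b) / sqrt (inertia m a * inertia m b))"
proof -
  let ?s = "sqrt (inertia m a * inertia m b)"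
  have "config_sphere_dist m a (\<lambda>i. u * b i) = arccos (Re (u * kin_herm m a b) / ?s)"
    if "cmod u = 1" for u
    using that by (simp add: config_sphere_dist_def kin_inner_rotate inertia_rotate)
  then have "shape_dist m a b = Inf ((\<lambda>u. arccos (Re (u * kin_herm m a b) / ?s)) ` {u. cmod u = 1})"
    unfolding shape_dist_def by (intro arg_cong[where f = Inf] image_cong) auto
  also have "\<dots> = arccos (cmod (kin_herm m a b) / ?s)"
    using assms cmod_kin_herm_square_le[of m a b]
    by (intro Inf_arccos_Re_rotations) (auto simp: real_le_rsqrt)
  finally show ?thesis .
qed

lemma cos_double_shape_dist:
  assumes "\<forall>i\<in>{1..3}. m i \<ge> 0" "inertia m a > 0" "inertia m b > 0"
  shows "cos (2 * shape_dist m a b) = 2 * cmod (kin_herm m a b)^2 / (inertia m a * inertia m b) - 1"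
proof -
  define c where "c = cmod (kin_herm m a b) / sqrt (inertia m a * inertia m b)"
  have "c \<le> 1"
    using assms cmod_kin_herm_square_le[of m a b] by (simp add: c_def real_le_rsqrt)
  moreover have "0 \<le> c" using assms by (simp add: c_def)
  ultimately have "cos (2 * arccos c) = 2 * c^2 - 1"
    by (simp add: cos_double_cos cos_arccos)
  then show ?thesis
    using assms by (simp add: shape_dist_eq_arccos c_def power_divide)
qed

lemma inertia_pos:
  assumes "\<forall>i\<in>{1..3}. m i > 0" "\<exists>i\<in>{1..3}. a i \<noteq> 0"
  shows "inertia m a > 0"
proof -
  obtain i where "i \<in> {1..3}" "a i \<noteq> 0" using assms(2) by blast
  then show ?thesis
    unfolding inertia_def using assms(1) by (intro sum_pos2[of _ i]) (auto simp: less_imp_le)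
qed

lemma is_mtriangle_iff:
  "is_mtriangle m a \<longleftrightarrow> of_real (m 1) * a 1 + of_real (m 2) * a 2 + of_real (m 3) * a 3 = 0"
  unfolding is_mtriangle_def sum_atLeastAtMost_1_3 ..

lemma signed_area_eq_cross_sum:
  "2 * signed_area a = Im (cnj (a 1) * a 2) + Im (cnj (a 2) * a 3) + Im (cnj (a 3) * a 1)"
  by (simp add: signed_area_def field_simps)

lemma mtriangle_cross_eq_area:
  assumes "m 1 + m 2 + m 3 = 1" "is_mtriangle m a"
  shows "m 1 * m 2 * Im (cnj (a 1) * a 2) = 2 * (m 1 * m 2 * m 3) * signed_area a"
    and "m 2 * m 3 * Im (cnj (a 2) * a 3) = 2 * (m 1 * m 2 * m 3) * signed_area a"
    and "m 3 * m 1 * Im (cnj (a 3) * a 1) = 2 * (m 1 * m 2 * m 3) * signed_area a"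
proof -
  let ?c = "\<lambda>i j. Im (cnj (a i) * a j)"
  have centre: "of_real (m 1) * a 1 + of_real (m 2) * a 2 + of_real (m 3) * a 3 = 0"
    using assms(2) by (simp add: is_mtriangle_iff)
  have c31: "m 3 * ?c 3 1 = m 2 * ?c 1 2"
    using arg_cong[OF centre, of "\<lambda>z. Im (cnj (a 1) * z)"] by (simp add: algebra_simps)
  have c23: "m 3 * ?c 2 3 = m 1 * ?c 1 2"
    using arg_cong[OF centre, of "\<lambda>z. Im (cnj (a 2) * z)"] by (simp add: algebra_simps)
  have "2 * (m 1 * m 2 * m 3) * signed_area a = m 1 * m 2 * (m 3 * (2 * signed_area a))"
    by simp
  also have "\<dots> = m 1 * m 2 * (m 3 * ?c 1 2 + m 3 * ?c 2 3 + m 3 * ?c 3 1)"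
    by (simp only: signed_area_eq_cross_sum distrib_left)
  also have "\<dots> = (m 1 + m 2 + m 3) * (m 1 * m 2 * ?c 1 2)"
    by (simp only: c31 c23) algebra
  also have "\<dots> = m 1 * m 2 * ?c 1 2"
    by (simp only: assms(1) mult_1_left)
  finally have c12: "m 1 * m 2 * ?c 1 2 = 2 * (m 1 * m 2 * m 3) * signed_area a"
    by (rule sym)
  then show "m 1 * m 2 * ?c 1 2 = 2 * (m 1 * m 2 * m 3) * signed_area a" .
  show "m 2 * m 3 * ?c 2 3 = 2 * (m 1 * m 2 * m 3) * signed_area a"
    unfolding c12[symmetric] using c23 by algebra
  show "m 3 * m 1 * ?c 3 1 = 2 * (m 1 * m 2 * m 3) * signed_area a"
    unfolding c12[symmetric] using c31 by algebra
qed

lemma normalised_centred_inner: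
  fixes a b c :: real and x y z :: complex
  assumes "b > 0" "c > 0" "a + b + c = 1"
    and "of_real a * x + of_real b * y + of_real c * z = 0"
    and "a * cmod x^2 = (1 - a) / 2" "b * cmod y^2 = (1 - b) / 2" "c * cmod z^2 = (1 - c) / 2"
  shows "Re (cnj y * z) = - 1 / 2"
proof -
  have "of_real a * x = - (of_real b * y + of_real c * z)"
    using assms(4) by (simp add: add_eq_0_iff2 add.assoc)
  then have "cmod (of_real a * x)^2 = cmod (of_real b * y + of_real c * z)^2"
    by (simp only: norm_minus_cancel)
  then have "a^2 * cmod x^2 = b^2 * cmod y^2 + c^2 * cmod z^2 + 2 * (b * c) * Re (cnj y * z)"
    unfolding cmod_add_square by (simp add: norm_mult power_mult_distrib algebra_simps)
  then have "b * c * (2 * Re (cnj y * z) + 1) = 0"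
    using assms(3,5-7) by algebra
  then show ?thesis using assms(1,2) by simp
qed

lemma north_pole_norms:
  assumes "is_north_pole m n"
  shows "m 1 * cmod (n 1)^2 = (1 - m 1) / 2" "m 2 * cmod (n 2)^2 = (1 - m 2) / 2"
    "m 3 * cmod (n 3)^2 = (1 - m 3) / 2"
  using assms by (auto simp: is_north_pole_def)

lemma north_pole_inertia:
  assumes "m 1 + m 2 + m 3 = 1" "is_north_pole m n"
  shows "inertia m n = 1"
  using north_pole_norms[OF assms(2)] assms(1)
  unfolding inertia_def sum_atLeastAtMost_1_3 by simp

lemma north_pole_inner:
  assumes "\<forall>i\<in>{1..3}. m i > 0" "m 1 + m 2 + m 3 = 1" "is_north_pole m n"
  shows "Re (cnj (n 1) * n 2) = - 1 / 2" "Re (cnj (n 2) * n 3) = - 1 / 2"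
    "Re (cnj (n 3) * n 1) = - 1 / 2"
proof -
  have centre: "of_real (m 1) * n 1 + of_real (m 2) * n 2 + of_real (m 3) * n 3 = 0"
    using assms(3) by (simp add: is_north_pole_def is_mtriangle_iff)
  note norms = north_pole_norms[OF assms(3)]
  have pos: "m 1 > 0" "m 2 > 0" "m 3 > 0" using assms(1) by auto
  show "Re (cnj (n 1) * n 2) = - 1 / 2"
    by (rule normalised_centred_inner[of "m 1" "m 2" "m 3" "n 3"])
      (use pos assms(2) centre norms in \<open>simp_all add: ac_simps\<close>)
  show "Re (cnj (n 2) * n 3) = - 1 / 2"
    by (rule normalised_centred_inner[of "m 2" "m 3" "m 1" "n 1"])
      (use pos assms(2) centre norms in \<open>simp_all add: ac_simps\<close>)
  show "Re (cnj (n 3) * n 1) = - 1 / 2"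
    by (rule normalised_centred_inner[of "m 3" "m 1" "m 2" "n 2"])
      (use pos assms(2) centre norms in \<open>simp_all add: ac_simps\<close>)
qed

lemma north_pole_cross:
  assumes "\<forall>i\<in>{1..3}. m i > 0" "m 1 + m 2 + m 3 = 1" "is_north_pole m n"
  shows "m 1 * m 2 * Im (cnj (n 1) * n 2) = sqrt (m 1 * m 2 * m 3) / 2"
    "m 2 * m 3 * Im (cnj (n 2) * n 3) = sqrt (m 1 * m 2 * m 3) / 2"
    "m 3 * m 1 * Im (cnj (n 3) * n 1) = sqrt (m 1 * m 2 * m 3) / 2"
proof -
  define Q where "Q = 2 * (m 1 * m 2 * m 3) * signed_area n"
  have cross: "m 1 * m 2 * Im (cnj (n 1) * n 2) = Q" "m 2 * m 3 * Im (cnj (n 2) * n 3) = Q"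
    "m 3 * m 1 * Im (cnj (n 3) * n 1) = Q"
    using mtriangle_cross_eq_area[OF assms(2)] assms(3) by (simp_all add: Q_def is_north_pole_def)
  have "Q > 0"
    using assms by (simp add: Q_def is_north_pole_def)
  note norms = north_pole_norms[OF assms(3)]
  have "Q^2 = (m 1 * m 2)^2 * (cmod (cnj (n 1) * n 2)^2 - Re (cnj (n 1) * n 2)^2)"
    unfolding cross(1)[symmetric] cmod_power2 by (simp add: power_mult_distrib)
  also have "\<dots> = m 1 * m 2 * ((m 1 * cmod (n 1)^2) * (m 2 * cmod (n 2)^2)) - (m 1 * m 2)^2 / 4"
    using north_pole_inner(1)[OF assms]
    by (simp add: norm_mult power_mult_distrib power2_eq_square algebra_simps)
  also have "\<dots> = m 1 * m 2 * m 3 / 4"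
    unfolding norms using assms(2) by (simp add: field_simps power2_eq_square) algebra
  finally have "sqrt (m 1 * m 2 * m 3) = 2 * Q"
    using \<open>Q > 0\<close> by (intro real_sqrt_unique) (auto simp: power_mult_distrib)
  then show "m 1 * m 2 * Im (cnj (n 1) * n 2) = sqrt (m 1 * m 2 * m 3) / 2"
    "m 2 * m 3 * Im (cnj (n 2) * n 3) = sqrt (m 1 * m 2 * m 3) / 2"
    "m 3 * m 1 * Im (cnj (n 3) * n 1) = sqrt (m 1 * m 2 * m 3) / 2"
    unfolding cross by simp_all
qed

lemma north_pole_kin_herm:
  assumes "\<forall>i\<in>{1..3}. m i > 0" "m 1 + m 2 + m 3 = 1" "is_mtriangle m a" "is_north_pole m n"
  shows "2 * cmod (kin_herm m a n)^2 = inertia m a + 4 * sqrt (m 1 * m 2 * m 3) * signed_area a"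
proof -
  let ?S = "sqrt (m 1 * m 2 * m 3)"
  let ?I = "\<lambda>i. m i * cmod (a i)^2"
  let ?R = "\<lambda>i j. m i * m j * Re (cnj (a i) * a j)" and ?C = "\<lambda>i j. Im (cnj (a i) * a j)"
  have "cmod (kin_herm m a n)^2 = ?I 1 * ((1 - m 1) / 2) + ?I 2 * ((1 - m 2) / 2) + ?I 3 * ((1 - m 3) / 2)
      + 2 * ?R 1 2 * (- 1 / 2) + 2 * ?R 2 3 * (- 1 / 2) + 2 * ?R 3 1 * (- 1 / 2)
      + 2 * ?C 1 2 * (?S / 2) + 2 * ?C 2 3 * (?S / 2) + 2 * ?C 3 1 * (?S / 2)"
    unfolding kin_herm_def sum_atLeastAtMost_1_3 cmod_sum3_square
    by (simp only: north_pole_norms[OF assms(4)] north_pole_inner[OF assms(1,2,4)]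
        north_pole_cross[OF assms(1,2,4)])
  moreover have "cmod (of_real (m 1) * (cnj (a 1) * 1) + of_real (m 2) * (cnj (a 2) * 1)
      + of_real (m 3) * (cnj (a 3) * 1))^2 = 0"
    using arg_cong[OF assms(3)[unfolded is_mtriangle_iff], of cnj] by simp
  then have "0 = ?I 1 * m 1 + ?I 2 * m 2 + ?I 3 * m 3 + 2 * ?R 1 2 + 2 * ?R 2 3 + 2 * ?R 3 1"
    unfolding cmod_sum3_square by simp
  moreover have "inertia m a = ?I 1 + ?I 2 + ?I 3"
    unfolding inertia_def sum_atLeastAtMost_1_3 ..
  ultimately show ?thesis
    using signed_area_eq_cross_sum[of a] by algebra
qed

theorem mainTheorem15:
  fixes m :: "nat \<Rightarrow> real" and \<delta> n :: "nat \<Rightarrow> complex"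
  assumes "\<forall>i\<in>{1..3}. m i > 0"
    and "m 1 + m 2 + m 3 = 1"
    and "is_mtriangle m \<delta>"
    and "\<exists>i\<in>{1..3}. \<delta> i \<noteq> 0"
    and "signed_area \<delta> > 0"
    and "is_north_pole m n"
  shows "cos (2 * shape_dist m \<delta> n)
           = 4 * sqrt (m 1 * m 2 * m 3) * signed_area \<delta> / inertia m \<delta>"
proof -
  have masses: "\<forall>i\<in>{1..3}. m i \<ge> 0"
    using assms(1) by (simp add: less_imp_le)
  have I: "inertia m \<delta> > 0"
    using assms(1,4) by (rule inertia_pos)
  have "cos (2 * shape_dist m \<delta> n) = 2 * cmod (kin_herm m \<delta> n)^2 / inertia m \<delta> - 1"
    using cos_double_shape_dist[OF masses I] north_pole_inertia[OF assms(2,6)] by simp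
  also have "\<dots> = (2 * cmod (kin_herm m \<delta> n)^2 - inertia m \<delta>) / inertia m \<delta>"
    using I by (simp add: diff_divide_distrib)
  also have "\<dots> = 4 * sqrt (m 1 * m 2 * m 3) * signed_area \<delta> / inertia m \<delta>"
    by (simp only: north_pole_kin_herm[OF assms(1-3,6)] add_diff_cancel_left')
  finally show ?thesis .
qed

end
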